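(* Let $\alpha$ be irrational and $n\ge1$. Then $$D^*(\beta_\alpha)\le \max_{s\in[n]}d^*(\mathcal{A}_s(\alpha))+d^*(\mathcal{A}_n(\alpha))\le 2\max_{s\in[n]}d^*(\mathcal{A}_s(\alpha)).$$
   Context: $[n]=\{1,\dots,n\}$ and $\{x\}$ denotes the fractional part of $x$. For irrational $\alpha$, the Sós permutation $\beta_\alpha$ of $[n]$ is defined by $\beta_\alpha(t)=|\{s\in[n]:\{\alpha s\}\le\{\alpha t\}\}|$ (so $\beta_\alpha(s)<\beta_\alpha(t)$ iff $\{\alpha s\}<\{\alpha t\}$). $D^*(\beta_\alpha)=\max_{s,t\in[n]}\bigl|\,|\beta_\alpha([s])\cap[t]|-st/n\,\bigr|$. For $s\ge1$, $\mathcal{A}_s(\alpha)=\{\{\alpha x\}:x\in[s]\}$, and for a finite set $A\subset[0,1]$, $d^*(A)=\sup_{0\le x\le1}\bigl|\,|A\cap[0,x]|-x|A|\,\bigr|$. *)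

theory Defs
  imports "HOL-Analysis.Analysis"
begin

definition sos_perm :: "real \<Rightarrow> nat \<Rightarrow> nat \<Rightarrow> nat" where
  "sos_perm \<alpha> n t = card {s \<in> {1..n}. frac (\<alpha> * real s) \<le> frac (\<alpha> * real t)}"

definition perm_discrepancy :: "nat \<Rightarrow> (nat \<Rightarrow> nat) \<Rightarrow> real" where
  "perm_discrepancy n \<beta> =
     Max {\<bar>real (card (\<beta> ` {1..s} \<inter> {1..t})) - real s * real t / real n\<bar> | s t. s \<in> {1..n} \<and> t \<in> {1..n}}"

definition A_set :: "real \<Rightarrow> nat \<Rightarrow> real set" where
  "A_set \<alpha> s = (\<lambda>x. frac (\<alpha> * real x)) ` {1..s}"

definition set_discrepancy :: "real set \<Rightarrow> real" where
  "set_discrepancy A = (SUP x\<in>{0..1}. \<bar>real (card (A \<inter> {0..x})) - x * real (card A)\<bar>)"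

end

theory Submission
  imports Defs
begin

text \<open>
  Let \<open>f x = frac (\<alpha> x)\<close>, injective on the naturals since \<open>\<alpha>\<close> is irrational, and let \<open>\<beta>\<close>
  rank \<open>[n]\<close> by \<open>f\<close>. For \<open>t = \<beta> u\<close> and \<open>y = f u\<close>, the set \<open>\<beta>([s]) \<inter> [t]\<close> is the image
  under \<open>\<beta>\<close> of \<open>{x \<in> [s]. f x \<le> y}\<close>, so its size is \<open>|A\<^sub>s \<inter> [0,y]|\<close>, while \<open>t = |A\<^sub>n \<inter> [0,y]|\<close>.
  Hence \<open>|\<beta>([s]) \<inter> [t]| - st/n = (|A\<^sub>s \<inter> [0,y]| - ys) + (s/n)(yn - |A\<^sub>n \<inter> [0,y]|)\<close>,
  and the two brackets are bounded by \<open>d*(A\<^sub>s)\<close> and \<open>d*(A\<^sub>n)\<close>, using \<open>s/n \<le> 1\<close>.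
\<close>

lemma inj_frac_mult_of_nat:
  fixes \<alpha> :: real
  assumes "\<alpha> \<notin> \<rat>"
  shows "inj (\<lambda>x::nat. frac (\<alpha> * real x))"
proof (rule injI)
  fix x y :: nat
  assume eq: "frac (\<alpha> * real x) = frac (\<alpha> * real y)"
  show "x = y"
  proof (rule ccontr)
    assume "x \<noteq> y"
    then have nz: "real x - real y \<noteq> 0" by simp
    have "\<alpha> * (real x - real y) = of_int (\<lfloor>\<alpha> * real x\<rfloor> - \<lfloor>\<alpha> * real y\<rfloor>)"
      using eq by (simp add: frac_def algebra_simps)
    then have "\<alpha> = of_int (\<lfloor>\<alpha> * real x\<rfloor> - \<lfloor>\<alpha> * real y\<rfloor>) / (real x - real y)"
      using nz by (simp add: field_simps)
    also have "\<dots> \<in> \<rat>" by (intro Rats_divide Rats_diff Rats_of_int Rats_of_nat)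
    finally show False using assms by simp
  qed
qed

definition rank_perm :: "(nat \<Rightarrow> 'a::linorder) \<Rightarrow> nat \<Rightarrow> nat \<Rightarrow> nat" where
  "rank_perm f n t = card {s \<in> {1..n}. f s \<le> f t}"

lemma sos_perm_eq_rank_perm: "sos_perm \<alpha> n = rank_perm (\<lambda>x. frac (\<alpha> * real x)) n"
  by (simp add: fun_eq_iff sos_perm_def rank_perm_def)

lemma rank_perm_le_iff:
  assumes "x \<in> {1..n}" "u \<in> {1..n}"
  shows "rank_perm f n x \<le> rank_perm f n u \<longleftrightarrow> f x \<le> f u"
proof
  assume "rank_perm f n x \<le> rank_perm f n u"
  show "f x \<le> f u"
  proof (rule ccontr)
    assume "\<not> f x \<le> f u"
    then have "{s \<in> {1..n}. f s \<le> f u} \<subset> {s \<in> {1..n}. f s \<le> f x}"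
      using assms by auto
    then have "rank_perm f n u < rank_perm f n x"
      unfolding rank_perm_def by (intro psubset_card_mono) auto
    with \<open>rank_perm f n x \<le> rank_perm f n u\<close> show False by simp
  qed
qed (auto simp: rank_perm_def intro: card_mono)

lemma rank_perm_in_range:
  assumes "x \<in> {1..n}"
  shows "rank_perm f n x \<in> {1..n}"
proof -
  have "card {s \<in> {1..n}. f s \<le> f x} \<le> card {1..n}" by (intro card_mono) auto
  moreover have "card {s \<in> {1..n}. f s \<le> f x} > 0"
    using assms by (subst card_gt_0_iff) auto
  ultimately show ?thesis unfolding rank_perm_def by simp
qed

lemma inj_on_rank_perm:
  assumes "inj_on f {1..n}"
  shows "inj_on (rank_perm f n) {1..n}"
proof (rule inj_onI)
  fix x y assume xy: "x \<in> {1..n}" "y \<in> {1..n}" "rank_perm f n x = rank_perm f n y"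
  then have "f x = f y" using rank_perm_le_iff by (metis order_antisym order_refl)
  with assms xy show "x = y" by (simp add: inj_on_eq_iff)
qed

lemma rank_perm_image:
  assumes "inj_on f {1..n}"
  shows "rank_perm f n ` {1..n} = {1..n}"
  using endo_inj_surj[OF _ _ inj_on_rank_perm[OF assms]] rank_perm_in_range by blast

lemma card_rank_perm_image_inter:
  assumes "inj_on f {1..n}" "s \<le> n" "u \<in> {1..n}"
  shows "card (rank_perm f n ` {1..s} \<inter> {1..rank_perm f n u}) = card {x \<in> {1..s}. f x \<le> f u}"
proof -
  let ?r = "rank_perm f n"
  have "?r ` {1..s} \<inter> {1..?r u} = ?r ` {x \<in> {1..s}. f x \<le> f u}"
    using assms(2,3) rank_perm_le_iff[OF _ assms(3), of _ f] rank_perm_in_range[of _ n f]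
    by (fastforce simp: image_iff)
  moreover have "inj_on ?r {x \<in> {1..s}. f x \<le> f u}"
    using inj_on_rank_perm[OF assms(1)] by (rule inj_on_subset) (use assms(2) in auto)
  ultimately show ?thesis by (simp add: card_image)
qed

lemma abs_count_le_set_discrepancy:
  assumes "finite A" "0 \<le> x" "x \<le> 1"
  shows "\<bar>real (card (A \<inter> {0..x})) - x * real (card A)\<bar> \<le> set_discrepancy A"
  unfolding set_discrepancy_def
proof (rule cSUP_upper)
  show "x \<in> {0..1}" using assms by simp
  show "bdd_above ((\<lambda>x. \<bar>real (card (A \<inter> {0..x})) - x * real (card A)\<bar>) ` {0..1})"
  proof (rule bdd_aboveI2)
    fix z :: real assume z: "z \<in> {0..1}"
    have "card (A \<inter> {0..z}) \<le> card A" using assms(1) by (intro card_mono) auto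
    moreover have "0 \<le> z * real (card A)" "z * real (card A) \<le> real (card A)"
      using z by (simp_all add: mult_left_le_one_le)
    ultimately show "\<bar>real (card (A \<inter> {0..z})) - z * real (card A)\<bar> \<le> 2 * real (card A)"
      by linarith
  qed
qed

lemma card_image_inter_atLeastAtMost:
  fixes f :: "'a \<Rightarrow> real"
  assumes "inj_on f S" "\<And>x. x \<in> S \<Longrightarrow> 0 \<le> f x"
  shows "card (f ` S \<inter> {0..y}) = card {x \<in> S. f x \<le> y}"
proof -
  have "f ` S \<inter> {0..y} = f ` {x \<in> S. f x \<le> y}" using assms(2) by auto
  moreover have "inj_on f {x \<in> S. f x \<le> y}" using assms(1) by (rule inj_on_subset) auto
  ultimately show ?thesis by (simp add: card_image)
qed

lemma perm_discrepancy_le: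
  assumes "n \<ge> 1"
    and "\<And>s t. s \<in> {1..n} \<Longrightarrow> t \<in> {1..n} \<Longrightarrow>
           \<bar>real (card (\<beta> ` {1..s} \<inter> {1..t})) - real s * real t / real n\<bar> \<le> B"
  shows "perm_discrepancy n \<beta> \<le> B"
  unfolding perm_discrepancy_def
proof (subst Max_le_iff)
  let ?D = "{\<bar>real (card (\<beta> ` {1..s} \<inter> {1..t})) - real s * real t / real n\<bar> |
             s t. s \<in> {1..n} \<and> t \<in> {1..n}}"
  show "finite ?D" by (rule finite_image_set2) auto
  show "?D \<noteq> {}" using assms(1) by auto
  show "\<forall>d \<in> ?D. d \<le> B" using assms(2) by blast
qed

lemma abs_diff_scaled_le:
  fixes c y s t n a b :: real
  assumes "\<bar>c - y * s\<bar> \<le> a" "\<bar>t - y * n\<bar> \<le> b" "0 \<le> s" "s \<le> n" "0 < n"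
  shows "\<bar>c - s * t / n\<bar> \<le> a + b"
proof -
  have scaled: "\<bar>(s / n) * (y * n - t)\<bar> \<le> b"
  proof -
    have "\<bar>(s / n) * (y * n - t)\<bar> = (s / n) * \<bar>t - y * n\<bar>"
      using assms(3,5) by (simp add: abs_mult abs_minus_commute)
    also have "\<dots> \<le> \<bar>t - y * n\<bar>"
      using assms(3-5) by (intro mult_left_le_one_le) auto
    finally show ?thesis using assms(2) by simp
  qed
  have "c - s * t / n = (c - y * s) + (s / n) * (y * n - t)"
    using assms(5) by (simp add: field_simps)
  then have "\<bar>c - s * t / n\<bar> \<le> \<bar>c - y * s\<bar> + \<bar>(s / n) * (y * n - t)\<bar>"
    by (metis abs_triangle_ineq)
  with assms(1) scaled show ?thesis by linarith
qed

lemma sos_perm_count_deviation_le: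
  assumes "\<alpha> \<notin> \<rat>" "s \<in> {1..n}" "t \<in> {1..n}"
  shows "\<bar>real (card (sos_perm \<alpha> n ` {1..s} \<inter> {1..t})) - real s * real t / real n\<bar>
           \<le> set_discrepancy (A_set \<alpha> s) + set_discrepancy (A_set \<alpha> n)"
proof -
  define f where "f = (\<lambda>x::nat. frac (\<alpha> * real x))"
  have inj: "inj_on f S" for S
    using inj_frac_mult_of_nat[OF assms(1)] unfolding f_def by (rule inj_on_subset) simp
  have A_eq: "A_set \<alpha> m = f ` {1..m}" for m by (simp add: A_set_def f_def)
  have card_A: "card (A_set \<alpha> m) = m" for m by (simp add: A_eq card_image[OF inj])
  have card_A_inter: "card (A_set \<alpha> m \<inter> {0..y}) = card {x \<in> {1..m}. f x \<le> y}" for m y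
    unfolding A_eq by (rule card_image_inter_atLeastAtMost[OF inj]) (simp add: f_def)
  obtain u where u: "u \<in> {1..n}" "rank_perm f n u = t"
    using rank_perm_image[OF inj] assms(3) by (metis imageE)
  define y where "y = f u"
  have y: "0 \<le> y" "y \<le> 1" by (simp_all add: y_def f_def frac_lt_1 less_imp_le)
  have "card (sos_perm \<alpha> n ` {1..s} \<inter> {1..t}) = card (A_set \<alpha> s \<inter> {0..y})"
    using card_rank_perm_image_inter[OF inj _ u(1)] assms(2) u(2)
    by (simp add: sos_perm_eq_rank_perm f_def[symmetric] card_A_inter y_def)
  moreover have "card (A_set \<alpha> n \<inter> {0..y}) = t"
    using u(2) by (simp add: card_A_inter rank_perm_def y_def)
  moreover have "\<bar>real (card (A_set \<alpha> m \<inter> {0..y})) - y * real m\<bar> \<le> set_discrepancy (A_set \<alpha> m)"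
    for m
    using abs_count_le_set_discrepancy[OF _ y, of "A_set \<alpha> m"] unfolding card_A
    by (simp add: A_eq)
  ultimately show ?thesis
    using assms(2) by (intro abs_diff_scaled_le[where y = y]) (auto simp: mult.commute)
qed

theorem mainTheorem11:
  fixes \<alpha> :: real and n :: nat
  assumes "\<alpha> \<notin> \<rat>" and "n \<ge> 1"
  shows "perm_discrepancy n (sos_perm \<alpha> n)
           \<le> (MAX s\<in>{1..n}. set_discrepancy (A_set \<alpha> s)) + set_discrepancy (A_set \<alpha> n)
       \<and> (MAX s\<in>{1..n}. set_discrepancy (A_set \<alpha> s)) + set_discrepancy (A_set \<alpha> n)
           \<le> 2 * (MAX s\<in>{1..n}. set_discrepancy (A_set \<alpha> s))"
proof -
  define M where "M = (MAX s\<in>{1..n}. set_discrepancy (A_set \<alpha> s))"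
  have le_M: "set_discrepancy (A_set \<alpha> s) \<le> M" if "s \<in> {1..n}" for s
    unfolding M_def using that by (intro Max_ge) auto
  have "perm_discrepancy n (sos_perm \<alpha> n) \<le> M + set_discrepancy (A_set \<alpha> n)"
  proof (rule perm_discrepancy_le[OF assms(2)])
    fix s t assume "s \<in> {1..n}" "t \<in> {1..n}"
    with assms(1) le_M show "\<bar>real (card (sos_perm \<alpha> n ` {1..s} \<inter> {1..t})) - real s * real t / real n\<bar>
        \<le> M + set_discrepancy (A_set \<alpha> n)"
      by (meson add_right_mono order_trans sos_perm_count_deviation_le)
  qed
  moreover have "set_discrepancy (A_set \<alpha> n) \<le> M" using le_M assms(2) by simp
  ultimately show ?thesis unfolding M_def by simp
qed

end
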